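(* Let $\boldsymbol{\lambda}=(\lambda_1,\dots,\lambda_n)$ be a vector of positive integers and let $(a_1,\dots,a_n,d)$ be a minimal generator of $M(\boldsymbol{\lambda})$ of type (3) or (4). Then $0\le a_i<\lambda_i$ for all $i=1,\dots,n$.
   Context: $M(\boldsymbol{\lambda})=\{(a_1,\dots,a_n,d)\in\mathbb{N}^{n+1}\mid a_1/\lambda_1+\cdots+a_n/\lambda_n\ge d\}$. A minimal generator of $M(\boldsymbol{\lambda})$ is a nonzero element that cannot be written as the sum of two nonzero elements of $M(\boldsymbol{\lambda})$. A minimal generator $(a_1,\dots,a_n,d)$ is of type (3) if $a_n=0$, $d>0$ and $a_ia_j>0$ for some $1\le i<j<n$; it is of type (4) if $d>0$ and $a_ia_n>0$ for some $1\le i<n$. *)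

theory Defs
  imports Complex_Main
begin

text \<open>Vectors in N^(n+1) are represented as pairs (a, d) with a a list of length n
  (a ! i is a_(i+1), 0-based indexing) and d a natural number.\<close>

definition M :: "nat list \<Rightarrow> (nat list \<times> nat) set" where
  "M lam = {(a, d). length a = length lam \<and>
      (\<Sum>i<length lam. real (a ! i) / real (lam ! i)) \<ge> real d}"

definition vzero :: "nat \<Rightarrow> nat list \<times> nat" where
  "vzero n = (replicate n 0, 0)"

definition vadd :: "nat list \<times> nat \<Rightarrow> nat list \<times> nat \<Rightarrow> nat list \<times> nat" where
  "vadd x y = (map2 (+) (fst x) (fst y), snd x + snd y)"

definition minimal_generator :: "nat list \<Rightarrow> nat list \<times> nat \<Rightarrow> bool" where
  "minimal_generator lam x \<longleftrightarrow>
     x \<in> M lam \<and> x \<noteq> vzero (length lam) \<and>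
     \<not> (\<exists>y z. y \<in> M lam \<and> z \<in> M lam \<and> y \<noteq> vzero (length lam) \<and>
              z \<noteq> vzero (length lam) \<and> x = vadd y z)"

definition gen_type3 :: "nat list \<times> nat \<Rightarrow> bool" where
  "gen_type3 x \<longleftrightarrow> (let a = fst x; d = snd x; n = length a in
     a ! (n - 1) = 0 \<and> d > 0 \<and>
     (\<exists>i j. i < j \<and> j < n - 1 \<and> a ! i * a ! j > 0))"

definition gen_type4 :: "nat list \<times> nat \<Rightarrow> bool" where
  "gen_type4 x \<longleftrightarrow> (let a = fst x; d = snd x; n = length a in
     d > 0 \<and> (\<exists>i. i < n - 1 \<and> a ! i * a ! (n - 1) > 0))"

end

theory Submission
  imports Defs
begin

text \<open>If \<open>a\<^sub>k \<ge> \<lambda>\<^sub>k\<close>, then \<open>(a, d)\<close> splits in \<open>M(\<lambda>)\<close> as \<open>(\<lambda>\<^sub>k e\<^sub>k, 1) + (a - \<lambda>\<^sub>k e\<^sub>k, d - 1)\<close>: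
  removing \<open>\<lambda>\<^sub>k e\<^sub>k\<close> lowers the weighted sum \<open>\<Sum> a\<^sub>i/\<lambda>\<^sub>i\<close> by exactly 1. For generators of type (3)
  or (4) we have \<open>d > 0\<close> and a second positive entry \<open>a\<^sub>r\<close>, \<open>r \<noteq> k\<close>, so the second summand
  is nonzero and the splitting contradicts minimality.\<close>

definition single_entry :: "nat \<Rightarrow> nat \<Rightarrow> nat \<Rightarrow> nat list" where
  "single_entry n k c = (replicate n 0)[k := c]"

lemma length_single_entry [simp]: "length (single_entry n k c) = n"
  by (simp add: single_entry_def)

lemma weighted_sum_single_entry:
  fixes w :: "nat \<Rightarrow> real"
  assumes "k < n"
  shows "(\<Sum>i<n. real (single_entry n k c ! i) / w i) = real c / w k"
proof -
  have "(\<Sum>i<n. real (single_entry n k c ! i) / w i) = (\<Sum>i<n. if i = k then real c / w k else 0)"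
    unfolding single_entry_def by (intro sum.cong) (auto simp: nth_list_update)
  then show ?thesis using assms by simp
qed

lemma weighted_sum_decrease_entry:
  fixes w :: "nat \<Rightarrow> real"
  assumes "k < n" "length a = n" "c \<le> a ! k"
  shows "(\<Sum>i<n. real (a[k := a ! k - c] ! i) / w i) = (\<Sum>i<n. real (a ! i) / w i) - real c / w k"
proof -
  have "(\<Sum>i<n. real (a[k := a ! k - c] ! i) / w i)
      = (\<Sum>i<n. real (a ! i) / w i - (if i = k then real c / w k else 0))"
    using assms by (intro sum.cong) (auto simp: nth_list_update of_nat_diff diff_divide_distrib)
  also have "\<dots> = (\<Sum>i<n. real (a ! i) / w i) - real c / w k"
    using assms(1) by (simp add: sum_subtractf)
  finally show ?thesis .
qed

lemma single_entry_in_M: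
  assumes "k < length lam" "lam ! k > 0"
  shows "(single_entry (length lam) k (lam ! k), 1) \<in> M lam"
  using assms by (simp add: M_def weighted_sum_single_entry)

lemma decrease_entry_in_M:
  assumes "(a, d) \<in> M lam" "k < length lam" "0 < lam ! k" "lam ! k \<le> a ! k"
  shows "(a[k := a ! k - lam ! k], d - 1) \<in> M lam"
proof -
  let ?S = "\<lambda>b. \<Sum>i<length lam. real (b ! i) / real (lam ! i)"
  have len: "length a = length lam" and sum_a: "real d \<le> ?S a"
    using assms(1) by (auto simp: M_def)
  have "?S (a[k := a ! k - lam ! k]) = ?S a - 1"
    using weighted_sum_decrease_entry[OF assms(2) len assms(4)] assms(3) by simp
  moreover have "0 \<le> ?S (a[k := a ! k - lam ! k])"
    by (intro sum_nonneg) simp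
  ultimately have "real (d - 1) \<le> ?S (a[k := a ! k - lam ! k])"
    using sum_a by (cases d) auto
  then show ?thesis using len by (simp add: M_def)
qed

lemma vadd_single_entry_decrease_entry:
  assumes "k < length a" "c \<le> a ! k" "0 < d"
  shows "(a, d) = vadd (single_entry (length a) k c, 1) (a[k := a ! k - c], d - 1)"
proof -
  have "map2 (+) (single_entry (length a) k c) (a[k := a ! k - c]) = a"
    using assms by (intro nth_equalityI) (auto simp: single_entry_def nth_list_update)
  then show ?thesis using assms(3) by (simp add: vadd_def)
qed

lemma minimal_generator_entry_less:
  assumes gen: "minimal_generator lam (a, d)"
    and "0 < d" "k < length lam" "0 < lam ! k"
    and r: "r < length lam" "r \<noteq> k" "0 < a ! r"
  shows "a ! k < lam ! k"
proof (rule ccontr)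
  assume "\<not> a ! k < lam ! k"
  then have le: "lam ! k \<le> a ! k" by simp
  have inM: "(a, d) \<in> M lam" and len: "length a = length lam"
    using gen by (auto simp: minimal_generator_def M_def)
  let ?y = "(single_entry (length lam) k (lam ! k), 1)"
  let ?z = "(a[k := a ! k - lam ! k], d - 1)"
  have "?y \<in> M lam" "?z \<in> M lam"
    using single_entry_in_M decrease_entry_in_M[OF inM _ _ le] assms by auto
  moreover have "?y \<noteq> vzero (length lam)"
    by (simp add: vzero_def)
  moreover have "?z \<noteq> vzero (length lam)"
  proof
    assume "?z = vzero (length lam)"
    then have "a[k := a ! k - lam ! k] ! r = 0"
      using r(1) by (simp add: vzero_def)
    then show False using r by simp
  qed
  moreover have "(a, d) = vadd ?y ?z"
    using vadd_single_entry_decrease_entry[of k a "lam ! k" d] assms le len by simp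
  ultimately show False
    using gen unfolding minimal_generator_def by blast
qed

lemma gen_type3_or_4_two_positive_entries:
  assumes "gen_type3 (a, d) \<or> gen_type4 (a, d)"
  shows "0 < d \<and> (\<exists>p q. p \<noteq> q \<and> p < length a \<and> q < length a \<and> 0 < a ! p \<and> 0 < a ! q)"
  using assms
proof
  assume "gen_type3 (a, d)"
  then obtain i j where "0 < d" "i < j" "j < length a - 1" "0 < a ! i * a ! j"
    unfolding gen_type3_def Let_def by auto
  then show ?thesis by (intro conjI exI[of _ i] exI[of _ j]) auto
next
  assume "gen_type4 (a, d)"
  then obtain i where "0 < d" "i < length a - 1" "0 < a ! i * a ! (length a - 1)"
    unfolding gen_type4_def Let_def by auto
  then show ?thesis by (intro conjI exI[of _ i] exI[of _ "length a - 1"]) auto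
qed

theorem lemma5p4:
  fixes lam a :: "nat list" and d :: nat
  assumes "\<forall>i < length lam. lam ! i > 0"
    and "minimal_generator lam (a, d)"
    and "gen_type3 (a, d) \<or> gen_type4 (a, d)"
  shows "\<forall>i < length lam. a ! i < lam ! i"
proof (intro allI impI)
  fix k assume k: "k < length lam"
  have len: "length a = length lam"
    using assms(2) by (simp add: minimal_generator_def M_def)
  obtain p q where "0 < d" "p \<noteq> q" "p < length lam" "q < length lam" "0 < a ! p" "0 < a ! q"
    using gen_type3_or_4_two_positive_entries[OF assms(3)] len by auto
  then obtain r where "r < length lam" "r \<noteq> k" "0 < a ! r"
    by metis
  then show "a ! k < lam ! k"
    using minimal_generator_entry_less[OF assms(2) \<open>0 < d\<close> k] assms(1) k by blast
qed

end
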